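(* Let $q$ be a prime power and $L\in\mathbb{F}_q[x]$ a $q$-polynomial of $q$-degree $n\geq2$ such that $L(x)/x$ is irreducible in $\mathbb{F}_q[x]$. Let $E$ be a splitting field of $L$ over $\mathbb{F}_q$ and $V\subseteq E$ the space of roots. For an ordered $\mathbb{F}_q$-basis $v_1,\dots,v_n$ of $V$ let $\epsilon_r:H_{n,r}(\mathbb{F}_q)\to E$, $\epsilon_r(P)=P(v_1,\dots,v_n)$. Then $\epsilon_r$ is not injective for every $r\geq q+1$.
   Context: $H_{n,r}(\mathbb{F}_q)$ is the space of homogeneous polynomials of degree $r$ in $\mathbb{F}_q[x_1,\dots,x_n]$ together with $0$. A $q$-polynomial of $q$-degree $n$ is $\sum_{i=0}^n a_ix^{q^i}$ with $a_n\neq0$. *)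

theory Defs
  imports "HOL-Computational_Algebra.Polynomial" "HOL-Library.Cardinality"
begin

definition is_field_hom :: "('a::field \<Rightarrow> 'e::field) \<Rightarrow> bool" where
  "is_field_hom \<phi> \<longleftrightarrow> \<phi> 1 = 1 \<and> (\<forall>x y. \<phi> (x + y) = \<phi> x + \<phi> y) \<and> (\<forall>x y. \<phi> (x * y) = \<phi> x * \<phi> y)"

definition is_q_polynomial :: "nat \<Rightarrow> nat \<Rightarrow> 'a::field poly \<Rightarrow> bool" where
  "is_q_polynomial q n L \<longleftrightarrow>
     (\<forall>k. coeff L k \<noteq> 0 \<longrightarrow> (\<exists>i\<le>n. k = q ^ i)) \<and> coeff L (q ^ n) \<noteq> 0"

definition root_space :: "('a::field \<Rightarrow> 'e::field) \<Rightarrow> 'a poly \<Rightarrow> 'e set" where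
  "root_space \<phi> L = {x. poly (map_poly \<phi> L) x = 0}"

definition is_subfield :: "'e::field set \<Rightarrow> bool" where
  "is_subfield S \<longleftrightarrow> 0 \<in> S \<and> 1 \<in> S \<and> (\<forall>x\<in>S. \<forall>y\<in>S. x + y \<in> S \<and> x * y \<in> S) \<and>
     (\<forall>x\<in>S. - x \<in> S \<and> inverse x \<in> S)"

text \<open>E (the whole type 'e) is a splitting field of L over the image of \<phi>:
  L splits into linear factors over E and E is generated by \<phi>(F_q) and the roots.\<close>
definition is_splitting_field :: "('a::field \<Rightarrow> 'e::field) \<Rightarrow> 'a poly \<Rightarrow> bool" where
  "is_splitting_field \<phi> L \<longleftrightarrow>
     (\<exists>c xs. map_poly \<phi> L = smult c (\<Prod>x\<leftarrow>xs. [:- x, 1:])) \<and>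
     (\<forall>S. is_subfield S \<and> range \<phi> \<subseteq> S \<and> root_space \<phi> L \<subseteq> S \<longrightarrow> S = UNIV)"

definition is_ordered_basis :: "('a::field \<Rightarrow> 'e::field) \<Rightarrow> 'e set \<Rightarrow> nat \<Rightarrow> (nat \<Rightarrow> 'e) \<Rightarrow> bool" where
  "is_ordered_basis \<phi> V n v \<longleftrightarrow>
     (\<forall>i<n. v i \<in> V) \<and>
     (\<forall>x\<in>V. \<exists>!c::nat \<Rightarrow> 'a. (\<forall>i\<ge>n. c i = 0) \<and> x = (\<Sum>i<n. \<phi> (c i) * v i))"

definition monomials :: "nat \<Rightarrow> nat \<Rightarrow> (nat \<Rightarrow> nat) set" where
  "monomials n r = {m. (\<forall>i\<ge>n. m i = 0) \<and> (\<Sum>i<n. m i) = r}"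

text \<open>H_{n,r}(F_q): homogeneous polynomials of degree r in x_1..x_n together with 0,
  represented by coefficient functions supported on the degree-r monomials.\<close>
definition hom_polys :: "nat \<Rightarrow> nat \<Rightarrow> ((nat \<Rightarrow> nat) \<Rightarrow> 'a::field) set" where
  "hom_polys n r = {P. \<forall>m. m \<notin> monomials n r \<longrightarrow> P m = 0}"

definition eval_hom :: "('a::field \<Rightarrow> 'e::field) \<Rightarrow> nat \<Rightarrow> nat \<Rightarrow> (nat \<Rightarrow> 'e) \<Rightarrow> ((nat \<Rightarrow> nat) \<Rightarrow> 'a) \<Rightarrow> 'e" where
  "eval_hom \<phi> n r v P = (\<Sum>m\<in>monomials n r. \<phi> (P m) * (\<Prod>i<n. v i ^ m i))"

end

theory Submission
  imports Defs "HOL-Library.FuncSet"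
begin

(* The Frobenius map x \<mapsto> x^q fixes the coefficients of L, so it maps the root space V into
   itself: v_i^q = \<Sum>_k c_ik v_k with c_ik \<in> F_q.  Write r = s + q + 1.  The q^(n^2) polynomials
   \<Sum>_ij b_ij x_0^s x_i^q x_j in H_{n,r} are pairwise distinct, but they evaluate to
   \<Sum>_kj d_kj v_0^s v_k v_j, an expression symmetric in (k, j) and hence determined by the
   n(n+1)/2 sums d_kj + d_jk (k \<le> j); since n \<ge> 2, there are fewer than q^(n^2) values. *)

(* Library lemma finite_field_power_card_eq_same needs sort finite_field, which a type
   variable of sort {finite,field} does not have. *)
lemma finite_field_power_card:
  fixes x :: "'a :: {finite,field}"
  shows "x ^ CARD('a) = x"
proof (cases "x = 0")
  case False
  let ?U = "UNIV - {0 :: 'a}"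
  have "x ^ card ?U * \<Prod>?U = (\<Prod>y\<in>?U. x * y)"
    by (simp add: prod.distrib)
  also have "\<dots> = \<Prod>?U"
    by (rule prod.reindex_bij_witness[of _ "\<lambda>y. y / x" "\<lambda>y. x * y"]) (use False in auto)
  finally have "x ^ card ?U = 1"
    using prod_zero_iff[of ?U "\<lambda>y. y"] by simp
  moreover have "CARD('a) = Suc (card ?U)"
    using finite_UNIV_card_ge_0[where 'a = 'a] by (simp add: card_Diff_singleton)
  ultimately show ?thesis
    by (simp only: power_Suc mult_1_right)
qed simp

lemma card_finite_field_ge_2: "CARD('a :: {finite,field}) \<ge> 2"
proof -
  have "card {0 :: 'a, 1} \<le> CARD('a)"
    by (rule card_mono) auto
  then show ?thesis
    by simp
qed

(* (X + 1)^q - X^q - 1 has degree < q but vanishes on all of F_q, so it is zero. *)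
lemma of_nat_card_choose_eq_0:
  assumes "0 < k" "k < CARD('a :: {finite,field})"
  shows "of_nat (CARD('a) choose k) = (0 :: 'a)"
proof -
  let ?q = "CARD('a)"
  define f :: "'a poly" where "f = (\<Sum>i\<in>{1..<?q}. monom (of_nat (?q choose i)) i)"
  have "poly f a = 0" for a :: 'a
  proof -
    have "{..?q} = insert 0 (insert ?q {1..<?q})"
      using assms by auto
    then have "(a + 1) ^ ?q = 1 + a ^ ?q + poly f a"
      using assms by (simp add: binomial_ring[of a 1] f_def poly_sum poly_monom)
    then show ?thesis
      by (simp add: finite_field_power_card)
  qed
  then have roots: "{x. poly f x = 0} = UNIV"
    by auto
  have "degree f \<le> ?q - 1"
    unfolding f_def by (intro degree_sum_le order.trans[OF degree_monom_le]) auto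
  then have "f = 0"
    using card_poly_roots_bound[of f] assms unfolding roots by fastforce
  then have "coeff f k = 0"
    by simp
  then show ?thesis
    using assms by (simp add: f_def coeff_sum)
qed

lemma field_hom_0: "is_field_hom \<phi> \<Longrightarrow> \<phi> 0 = 0"
  unfolding is_field_hom_def by (metis add_cancel_right_right)

lemma field_hom_add: "is_field_hom \<phi> \<Longrightarrow> \<phi> (x + y) = \<phi> x + \<phi> y"
  unfolding is_field_hom_def by blast

lemma field_hom_mult: "is_field_hom \<phi> \<Longrightarrow> \<phi> (x * y) = \<phi> x * \<phi> y"
  unfolding is_field_hom_def by blast

lemma field_hom_sum: "is_field_hom \<phi> \<Longrightarrow> \<phi> (sum f A) = (\<Sum>x\<in>A. \<phi> (f x))"
  by (induction A rule: infinite_finite_induct) (auto simp: field_hom_0 field_hom_add)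

lemma field_hom_power: "is_field_hom \<phi> \<Longrightarrow> \<phi> (x ^ k) = \<phi> x ^ k"
  by (induction k) (auto simp: is_field_hom_def)

lemma field_hom_of_nat: "is_field_hom \<phi> \<Longrightarrow> \<phi> (of_nat k) = of_nat k"
  by (induction k) (auto simp: field_hom_0 is_field_hom_def)

lemma freshmans_dream_card:
  fixes \<phi> :: "'a::{finite,field} \<Rightarrow> 'e::field"
  assumes "is_field_hom \<phi>"
  shows "(x + y :: 'e) ^ CARD('a) = x ^ CARD('a) + y ^ CARD('a)"
proof -
  let ?q = "CARD('a)"
  have "(x + y) ^ ?q = (\<Sum>k\<le>?q. of_nat (?q choose k) * x ^ k * y ^ (?q - k))"
    by (rule binomial_ring)
  also have "\<dots> = (\<Sum>k\<in>{0, ?q}. of_nat (?q choose k) * x ^ k * y ^ (?q - k))"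
  proof (intro sum.mono_neutral_right ballI)
    fix k assume "k \<in> {..?q} - {0, ?q}"
    then have "of_nat (?q choose k) = (0 :: 'a)"
      by (intro of_nat_card_choose_eq_0) auto
    then have "of_nat (?q choose k) = (0 :: 'e)"
      by (metis assms field_hom_0 field_hom_of_nat)
    then show "of_nat (?q choose k) * x ^ k * y ^ (?q - k) = 0"
      by simp
  qed auto
  finally show ?thesis
    by (simp add: add_ac)
qed

lemma freshmans_dream_card_sum:
  fixes \<phi> :: "'a::{finite,field} \<Rightarrow> 'e::field"
  assumes "is_field_hom \<phi>"
  shows "(sum f A :: 'e) ^ CARD('a) = (\<Sum>x\<in>A. f x ^ CARD('a))"
  by (induction A rule: infinite_finite_induct)
    (auto simp: freshmans_dream_card[OF assms] power_0_left)

lemma poly_map_poly_power_card: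
  fixes \<phi> :: "'a::{finite,field} \<Rightarrow> 'e::field"
  assumes "is_field_hom \<phi>"
  shows "poly (map_poly \<phi> p) (x ^ CARD('a)) = poly (map_poly \<phi> p) x ^ CARD('a)"
proof -
  let ?q = "CARD('a)" and ?M = "map_poly \<phi> p"
  have "coeff ?M i ^ ?q = coeff ?M i" for i
    by (simp add: coeff_map_poly field_hom_0 field_hom_power[OF assms, symmetric]
        finite_field_power_card assms)
  then have "coeff ?M i * (x ^ ?q) ^ i = (coeff ?M i * x ^ i) ^ ?q" for i
    by (simp add: power_mult_distrib flip: power_mult) (simp add: mult.commute)
  then show ?thesis
    by (simp add: poly_altdef freshmans_dream_card_sum[OF assms])
qed

lemma root_space_power_card:
  fixes \<phi> :: "'a::{finite,field} \<Rightarrow> 'e::field"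
  assumes "is_field_hom \<phi>" "x \<in> root_space \<phi> L"
  shows "x ^ CARD('a) \<in> root_space \<phi> L"
  using assms by (simp add: root_space_def poly_map_poly_power_card)

lemma ordered_basis_power_card_expansion:
  fixes \<phi> :: "'a::{finite,field} \<Rightarrow> 'e::field"
  assumes "is_field_hom \<phi>" "is_ordered_basis \<phi> (root_space \<phi> L) n v"
  obtains C where "\<And>i. i < n \<Longrightarrow> v i ^ CARD('a) = (\<Sum>k<n. \<phi> (C i k) * v k)"
proof -
  have "\<exists>c. v i ^ CARD('a) = (\<Sum>k<n. \<phi> (c k) * v k)" if "i < n" for i
    using assms that root_space_power_card unfolding is_ordered_basis_def by metis
  then show ?thesis
    using that by metis
qed

lemma not_inj_on_if_image_subset_smaller:
  assumes "finite B" "card B < card A" "f ` A \<subseteq> g ` B"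
  shows "\<not> inj_on f A"
proof
  assume "inj_on f A"
  then have "card A = card (f ` A)"
    by (simp add: card_image)
  also have "\<dots> \<le> card (g ` B)"
    using assms by (intro card_mono) auto
  also have "\<dots> \<le> card B"
    using assms by (intro card_image_le)
  finally show False
    using assms by simp
qed

lemma sum_symmetric_weights:
  fixes c w :: "nat \<Rightarrow> nat \<Rightarrow> 'b::comm_semiring_1"
  assumes "\<And>k j. w k j = w j k"
  shows "(\<Sum>k<n. \<Sum>j<n. c k j * w k j) =
    (\<Sum>(k, j)\<in>{(k, j). k \<le> j \<and> j < n}. (c k j + (if k < j then c j k else 0)) * w k j)"
proof -
  let ?U = "{(k, j). k \<le> j \<and> j < n}" and ?L = "{(k, j). k < j \<and> j < n}"
    and ?g = "\<lambda>(k, j). c k j * w k j"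
  have "finite ?U"
    by (rule finite_subset[of _ "{..<n} \<times> {..<n}"]) auto
  have L_filter: "?L = {p \<in> ?U. fst p < snd p}"
    by auto
  have "(\<Sum>k<n. \<Sum>j<n. c k j * w k j) = sum ?g ({..<n} \<times> {..<n})"
    by (simp add: sum.cartesian_product)
  also have "\<dots> = sum ?g (?U \<union> prod.swap ` ?L)"
    by (rule arg_cong[where f = "sum ?g"]) auto
  also have "\<dots> = sum ?g ?U + sum ?g (prod.swap ` ?L)"
    using \<open>finite ?U\<close> by (intro sum.union_disjoint) (auto simp: L_filter)
  also have "sum ?g (prod.swap ` ?L) = (\<Sum>(k, j)\<in>?L. c j k * w k j)"
    using assms by (subst sum.reindex) (auto intro!: sum.cong)
  also have "\<dots> = (\<Sum>(k, j)\<in>?U. (if k < j then c j k else 0) * w k j)"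
    unfolding L_filter using \<open>finite ?U\<close> by (subst sum.inter_filter) (auto intro!: sum.cong)
  finally show ?thesis
    by (simp add: sum.distrib[symmetric] distrib_right split_def)
qed

lemma finite_monomials: "finite (monomials n r)"
proof (rule finite_subset)
  show "monomials n r \<subseteq> {m. \<forall>i. (i \<in> {..<n} \<longrightarrow> m i \<in> {..r}) \<and> (i \<notin> {..<n} \<longrightarrow> m i = 0)}"
    unfolding monomials_def by (auto simp: member_le_sum[of _ "{..<n}", simplified])
qed (intro finite_set_of_finite_funs; simp)

definition frobenius_monomial :: "nat \<Rightarrow> nat \<Rightarrow> nat \<Rightarrow> nat \<Rightarrow> nat \<Rightarrow> nat" where
  "frobenius_monomial s q i j =
     (\<lambda>t. (if t = 0 then s else 0) + (if t = i then q else 0) + (if t = j then 1 else 0))"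

lemma frobenius_monomial_inject:
  assumes "q \<ge> 2" "frobenius_monomial s q i j = frobenius_monomial s q i' j'"
  shows "i = i' \<and> j = j'"
proof -
  have "frobenius_monomial s q i j t = frobenius_monomial s q i' j' t" for t
    using assms(2) by simp
  from this[of i] this[of j] show ?thesis
    using assms(1) unfolding frobenius_monomial_def by (auto split: if_splits)
qed

lemma frobenius_monomial_in_monomials:
  assumes "i < n" "j < n" "r = s + q + 1"
  shows "frobenius_monomial s q i j \<in> monomials n r"
  using assms unfolding monomials_def frobenius_monomial_def by (auto simp: sum.distrib)

lemma prod_power_frobenius_monomial:
  assumes "i < n" "j < n"
  shows "(\<Prod>t<n. v t ^ frobenius_monomial s q i j t) = v 0 ^ s * v i ^ q * v j"
proof -
  have single: "(\<Prod>t<n. v t ^ (if t = a then e else 0)) = v a ^ e" if "a < n" for a e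
  proof -
    have "(\<Prod>t<n. v t ^ (if t = a then e else 0)) = (\<Prod>t<n. if t = a then v t ^ e else 1)"
      by (intro prod.cong) auto
    then show ?thesis
      using that by simp
  qed
  show ?thesis
    using assms unfolding frobenius_monomial_def
    by (simp add: power_add prod.distrib single)
qed

definition frobenius_poly ::
    "nat \<Rightarrow> nat \<Rightarrow> nat \<Rightarrow> (nat \<times> nat \<Rightarrow> 'a) \<Rightarrow> (nat \<Rightarrow> nat) \<Rightarrow> 'a::comm_monoid_add" where
  "frobenius_poly s q n b m = (\<Sum>i<n. \<Sum>j<n. if m = frobenius_monomial s q i j then b (i, j) else 0)"

lemma frobenius_poly_in_hom_polys:
  assumes "r = s + q + 1"
  shows "frobenius_poly s q n b \<in> hom_polys n r"
  unfolding hom_polys_def frobenius_poly_def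
  using frobenius_monomial_in_monomials[OF _ _ assms] by (auto intro!: sum.neutral)

lemma frobenius_poly_frobenius_monomial:
  assumes "q \<ge> 2" "i < n" "j < n"
  shows "frobenius_poly s q n b (frobenius_monomial s q i j) = b (i, j)"
proof -
  have "frobenius_poly s q n b (frobenius_monomial s q i j) =
      (\<Sum>i'<n. \<Sum>j'<n. if i' = i \<and> j' = j then b (i', j') else 0)"
    unfolding frobenius_poly_def using frobenius_monomial_inject[OF assms(1), of s i j]
    by (intro sum.cong refl) metis
  also have "\<dots> = (\<Sum>i'<n. if i' = i then b (i, j) else 0)"
  proof (intro sum.cong refl)
    fix i'
    show "(\<Sum>j'<n. if i' = i \<and> j' = j then b (i', j') else 0) = (if i' = i then b (i, j) else 0)"
      using assms by (cases "i' = i") simp_all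
  qed
  also have "\<dots> = b (i, j)"
    using assms by simp
  finally show ?thesis .
qed

lemma inj_on_frobenius_poly:
  assumes "q \<ge> 2"
  shows "inj_on (frobenius_poly s q n) ({..<n} \<times> {..<n} \<rightarrow>\<^sub>E UNIV)"
proof (rule inj_onI)
  fix b b' :: "nat \<times> nat \<Rightarrow> 'a"
  assume b: "b \<in> {..<n} \<times> {..<n} \<rightarrow>\<^sub>E UNIV" "b' \<in> {..<n} \<times> {..<n} \<rightarrow>\<^sub>E UNIV"
    and eq: "frobenius_poly s q n b = frobenius_poly s q n b'"
  show "b = b'"
  proof (rule PiE_ext[OF b])
    fix p assume "p \<in> {..<n} \<times> {..<n}"
    then show "b p = b' p"
      using eq frobenius_poly_frobenius_monomial[OF assms] by (metis mem_Sigma_iff lessThan_iff prod.collapse)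
  qed
qed

lemma eval_hom_frobenius_poly:
  assumes "is_field_hom \<phi>" "r = s + q + 1"
  shows "eval_hom \<phi> n r v (frobenius_poly s q n b) =
    (\<Sum>i<n. \<Sum>j<n. \<phi> (b (i, j)) * (v 0 ^ s * v i ^ q * v j))"
proof -
  have "eval_hom \<phi> n r v (frobenius_poly s q n b) = (\<Sum>m\<in>monomials n r. \<Sum>i<n. \<Sum>j<n.
      if m = frobenius_monomial s q i j then \<phi> (b (i, j)) * (\<Prod>t<n. v t ^ m t) else 0)"
    unfolding eval_hom_def frobenius_poly_def
    by (auto simp: field_hom_sum[OF assms(1)] field_hom_0[OF assms(1)] sum_distrib_right intro!: sum.cong)
  also have "\<dots> = (\<Sum>i<n. \<Sum>j<n. \<Sum>m\<in>monomials n r.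
      if m = frobenius_monomial s q i j then \<phi> (b (i, j)) * (\<Prod>t<n. v t ^ m t) else 0)"
    by (subst sum.swap) (intro sum.cong refl sum.swap)
  also have "\<dots> = (\<Sum>i<n. \<Sum>j<n. \<phi> (b (i, j)) * (v 0 ^ s * v i ^ q * v j))"
    using frobenius_monomial_in_monomials[OF _ _ assms(2)]
    by (intro sum.cong refl) (simp add: finite_monomials prod_power_frobenius_monomial)
  finally show ?thesis .
qed

lemma eval_hom_frobenius_poly_in_image:
  assumes hom: "is_field_hom \<phi>" and r: "r = s + q + 1"
    and frobenius: "\<And>i. i < n \<Longrightarrow> v i ^ q = (\<Sum>k<n. \<phi> (C i k) * v k)"
  defines "U \<equiv> {(k, j). k \<le> j \<and> j < n}"
  shows "eval_hom \<phi> n r v (frobenius_poly s q n b) \<in>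
    (\<lambda>e. \<Sum>(k, j)\<in>U. \<phi> (e (k, j)) * (v 0 ^ s * v k * v j)) ` (U \<rightarrow>\<^sub>E UNIV)"
proof -
  define w where "w k j = v 0 ^ s * v k * v j" for k j
  define d where "d k j = (\<Sum>i<n. b (i, j) * C i k)" for k j
  have "eval_hom \<phi> n r v (frobenius_poly s q n b) =
      (\<Sum>i<n. \<Sum>j<n. \<Sum>k<n. \<phi> (b (i, j) * C i k) * w k j)"
    unfolding eval_hom_frobenius_poly[OF hom r]
    by (intro sum.cong refl)
      (simp add: frobenius field_hom_mult[OF hom] w_def sum_distrib_left sum_distrib_right mult_ac)
  also have "\<dots> = (\<Sum>k<n. \<Sum>j<n. \<Sum>i<n. \<phi> (b (i, j) * C i k) * w k j)"
    by (subst sum.swap) (subst (1 2) sum.swap, rule refl)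
  also have "\<dots> = (\<Sum>k<n. \<Sum>j<n. \<phi> (d k j) * w k j)"
    by (simp add: d_def field_hom_sum[OF hom] sum_distrib_right)
  also have "\<dots> = (\<Sum>(k, j)\<in>U. (\<phi> (d k j) + (if k < j then \<phi> (d j k) else 0)) * w k j)"
    unfolding U_def by (rule sum_symmetric_weights) (simp add: w_def mult_ac)
  also have "\<dots> = (\<Sum>(k, j)\<in>U. \<phi> (d k j + (if k < j then d j k else 0)) * w k j)"
    by (intro sum.cong refl) (auto simp: field_hom_add[OF hom] field_hom_0[OF hom])
  finally show ?thesis
    unfolding w_def
    by (intro image_eqI[where x = "restrict (\<lambda>(k, j). d k j + (if k < j then d j k else 0)) U"])
      (auto intro!: sum.cong)
qed

lemma not_inj_on_eval_hom_frobenius_polys: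
  fixes \<phi> :: "'a::{finite,field} \<Rightarrow> 'e::field"
  assumes "is_field_hom \<phi>" "r = s + q + 1" "q \<ge> 2" "n \<ge> 2"
    and "\<And>i. i < n \<Longrightarrow> v i ^ q = (\<Sum>k<n. \<phi> (C i k) * v k)"
  shows "\<not> inj_on (eval_hom \<phi> n r v) (frobenius_poly s q n ` ({..<n} \<times> {..<n} \<rightarrow>\<^sub>E UNIV))"
proof (rule not_inj_on_if_image_subset_smaller)
  let ?S = "{..<n} \<times> {..<n}" and ?U = "{(k, j). k \<le> j \<and> j < n}"
  have "?U \<subseteq> ?S" "(1, 0) \<in> ?S" "(1, 0) \<notin> ?U"
    using assms(4) by auto
  then have "?U \<subset> ?S"
    by (metis psubsetI)
  have "finite ?S"
    by simp
  have "finite ?U"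
    by (rule finite_subset[OF psubset_imp_subset]) fact+
  then show "finite (?U \<rightarrow>\<^sub>E (UNIV :: 'a set))"
    by (simp add: finite_PiE)
  have "card (?U \<rightarrow>\<^sub>E (UNIV :: 'a set)) = CARD('a) ^ card ?U"
    using \<open>finite ?U\<close> by (simp add: card_PiE)
  also have "\<dots> < CARD('a) ^ card ?S"
    using psubset_card_mono[OF \<open>finite ?S\<close> \<open>?U \<subset> ?S\<close>] card_finite_field_ge_2[where 'a = 'a]
    by (intro power_strict_increasing) simp_all
  also have "\<dots> = card (?S \<rightarrow>\<^sub>E (UNIV :: 'a set))"
    using \<open>finite ?S\<close> by (simp only: card_PiE prod_constant card_UNIV)
  also have "\<dots> = card (frobenius_poly s q n ` (?S \<rightarrow>\<^sub>E (UNIV :: 'a set)))"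
    using inj_on_frobenius_poly[OF assms(3)] by (rule card_image[symmetric])
  finally show "card (?U \<rightarrow>\<^sub>E (UNIV :: 'a set)) <
      card (frobenius_poly s q n ` (?S \<rightarrow>\<^sub>E (UNIV :: 'a set)))" .
  show "eval_hom \<phi> n r v ` frobenius_poly s q n ` (?S \<rightarrow>\<^sub>E UNIV) \<subseteq>
      (\<lambda>e. \<Sum>(k, j)\<in>?U. \<phi> (e (k, j)) * (v 0 ^ s * v k * v j)) ` (?U \<rightarrow>\<^sub>E UNIV)"
    unfolding image_image
    by (rule image_subsetI) (rule eval_hom_frobenius_poly_in_image[OF assms(1,2,5)])
qed

theorem theorem7p5:
  fixes \<phi> :: "'a::{finite,field} \<Rightarrow> 'e::field"
    and L :: "'a poly" and n r :: nat and v :: "nat \<Rightarrow> 'e"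
  assumes "is_field_hom \<phi>"
    and "is_q_polynomial CARD('a) n L"
    and "n \<ge> 2"
    and "irreducible (L div [:0, 1:])"
    and "is_splitting_field \<phi> L"
    and "is_ordered_basis \<phi> (root_space \<phi> L) n v"
    and "r \<ge> CARD('a) + 1"
  shows "\<not> inj_on (eval_hom \<phi> n r v) (hom_polys n r)"
proof -
  let ?q = "CARD('a)" and ?s = "r - CARD('a) - 1"
  obtain C where "\<And>i. i < n \<Longrightarrow> v i ^ ?q = (\<Sum>k<n. \<phi> (C i k) * v k)"
    using ordered_basis_power_card_expansion[OF assms(1,6)] by blast
  moreover have r: "r = ?s + ?q + 1"
    using assms(7) by simp
  ultimately have "\<not> inj_on (eval_hom \<phi> n r v) (frobenius_poly ?s ?q n ` ({..<n} \<times> {..<n} \<rightarrow>\<^sub>E UNIV))"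
    using not_inj_on_eval_hom_frobenius_polys[OF assms(1) r card_finite_field_ge_2 assms(3)] by blast
  moreover have "frobenius_poly ?s ?q n ` ({..<n} \<times> {..<n} \<rightarrow>\<^sub>E UNIV) \<subseteq> hom_polys n r"
    using frobenius_poly_in_hom_polys[OF r] by blast
  ultimately show ?thesis
    using inj_on_subset by blast
qed

end
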